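(* Let $\mathcal{G}$ be a stochastic game with vertex set $V$ and priority functions $\Omega_1,\Omega_2:V\to\mathbb{N}$, and suppose the largest $\Omega_1$-priority $d$ occurring in $\mathcal{G}$ is odd. Let $A=\mathsf{PosAttr}_2(V(\Omega_1,d))$ (computed in $\mathcal{G}$) and $B=V\setminus A$. Then the sure-almost-sure winning region of Player 1 in $\mathcal{G}$ for $\mathsf{Parity}(\Omega_1)$ and $\mathsf{Parity}(\Omega_2)$ is empty if and only if the sure-almost-sure winning region of Player 1 in the subgame $\mathcal{G}_{\upharpoonright B}$ for the same objectives is empty.
   Context: A stochastic game $\langle V,(V_1,V_2,V_\Diamond),E,\delta\rangle$ has a finite vertex set $V$ partitioned into Player-1, Player-2 and probabilistic vertices, edges $E\subseteq V\times V$ with every vertex having a successor ($E(v)$ denotes the successor set), and $\delta:V_\Diamond\to\mathcal{D}(V)$ with support of $\delta(v)$ equal to $E(v)$. A strategy for Player $i$ maps histories ending in $V_i$ to a successor of the last vertex; $\mathsf{Out}(v,\sigma_1)$ is the set of plays from $v$ consistent with $\sigma_1$, and $\mathsf{Pr}_v^{\sigma_1,\sigma_2}$ the probability measure on plays. $\mathsf{Parity}(\Omega)$ is the set of plays $v_0v_1\dots$ with $\limsup_j\Omega(v_j)$ even. A Player-1 strategy $\sigma_1$ is sure-almost-sure winning from $v$ if $\mathsf{Out}(v,\sigma_1)\subseteq\mathsf{Parity}(\Omega_1)$ and $\mathsf{Pr}_v^{\sigma_1,\sigma_2}(\mathsf{Parity}(\Omega_2))=1$ for every Player-2 strategy $\sigma_2$;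 the sure-almost-sure winning region is the set of vertices from which such a strategy exists. $V(\Omega_1,d)=\{v\mid\Omega_1(v)=d\}$. $\mathsf{PosPre}_2(U)=\{v\in V_2\cup V_\Diamond\mid E(v)\cap U\ne\emptyset\}\cup\{v\in V_1\mid E(v)\subseteq U\}$ and $\mathsf{PosAttr}_2(T)$ is the least fixed point of $X\mapsto\mathsf{PosPre}_2(X)\cup T$. The set $B=V\setminus\mathsf{PosAttr}_2(T)$ is a trap for Player 2 (every Player-1 vertex in $B$ has a successor in $B$, and all successors of Player-2 and probabilistic vertices in $B$ lie in $B$), and $\mathcal{G}_{\upharpoonright B}$ is the game restricted to vertices $B$ (edges and probabilities restricted to $B$). *)

theory Defs
  imports "HOL-Probability.Probability"
begin

record 'v game =
  verts :: "'v set"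
  V1 :: "'v set"
  V2 :: "'v set"
  Vp :: "'v set"
  edges :: "('v \<times> 'v) set"
  delta :: "'v \<Rightarrow> 'v pmf"

definition succs :: "'v game \<Rightarrow> 'v \<Rightarrow> 'v set" where
  "succs G v = {w. (v, w) \<in> edges G}"

definition stoch_game :: "'v game \<Rightarrow> bool" where
  "stoch_game G \<longleftrightarrow>
     finite (verts G) \<and>
     V1 G \<union> V2 G \<union> Vp G = verts G \<and>
     V1 G \<inter> V2 G = {} \<and> V1 G \<inter> Vp G = {} \<and> V2 G \<inter> Vp G = {} \<and>
     edges G \<subseteq> verts G \<times> verts G \<and>
     (\<forall>v\<in>verts G. succs G v \<noteq> {}) \<and>
     (\<forall>v\<in>Vp G. set_pmf (delta G v) = succs G v)"

definition strategy :: "'v game \<Rightarrow> 'v set \<Rightarrow> ('v list \<Rightarrow> 'v) \<Rightarrow> bool" where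
  "strategy G Vi \<sigma> \<longleftrightarrow> (\<forall>h. h \<noteq> [] \<and> last h \<in> Vi \<longrightarrow> \<sigma> h \<in> succs G (last h))"

definition Out :: "'v game \<Rightarrow> 'v \<Rightarrow> ('v list \<Rightarrow> 'v) \<Rightarrow> 'v stream set" where
  "Out G v \<sigma>1 = {\<rho>. \<rho> !! 0 = v \<and> (\<forall>i. (\<rho> !! i, \<rho> !! Suc i) \<in> edges G) \<and>
      (\<forall>i. \<rho> !! i \<in> V1 G \<longrightarrow> \<rho> !! Suc i = \<sigma>1 (stake (Suc i) \<rho>))}"

definition parity :: "('v \<Rightarrow> nat) \<Rightarrow> 'v stream \<Rightarrow> bool" where
  "parity \<Omega> \<rho> \<longleftrightarrow>
     (\<exists>p. even p \<and> (\<exists>\<^sub>\<infinity>j. \<Omega> (\<rho> !! j) = p) \<and> (\<forall>\<^sub>\<infinity>j. \<Omega> (\<rho> !! j) \<le> p))"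

definition trans_prob :: "'v game \<Rightarrow> ('v list \<Rightarrow> 'v) \<Rightarrow> ('v list \<Rightarrow> 'v) \<Rightarrow> 'v list \<Rightarrow> 'v \<Rightarrow> real" where
  "trans_prob G \<sigma>1 \<sigma>2 h w =
     (if last h \<in> V1 G then (if \<sigma>1 h = w then 1 else 0)
      else if last h \<in> V2 G then (if \<sigma>2 h = w then 1 else 0)
      else if last h \<in> Vp G then pmf (delta G (last h)) w
      else 0)"

definition hist_prob :: "'v game \<Rightarrow> 'v \<Rightarrow> ('v list \<Rightarrow> 'v) \<Rightarrow> ('v list \<Rightarrow> 'v) \<Rightarrow> 'v list \<Rightarrow> real" where
  "hist_prob G v \<sigma>1 \<sigma>2 h =
     (if h ! 0 = v then (\<Prod>i<length h - 1. trans_prob G \<sigma>1 \<sigma>2 (take (Suc i) h) (h ! Suc i))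
      else 0)"

definition Pr :: "'v game \<Rightarrow> 'v \<Rightarrow> ('v list \<Rightarrow> 'v) \<Rightarrow> ('v list \<Rightarrow> 'v) \<Rightarrow> 'v stream measure" where
  "Pr G v \<sigma>1 \<sigma>2 = (THE M. prob_space M \<and> sets M = sets (stream_space (count_space UNIV)) \<and>
      (\<forall>h. h \<noteq> [] \<longrightarrow> emeasure M (sstart UNIV h) = ennreal (hist_prob G v \<sigma>1 \<sigma>2 h)))"

definition sas_region :: "'v game \<Rightarrow> ('v \<Rightarrow> nat) \<Rightarrow> ('v \<Rightarrow> nat) \<Rightarrow> 'v set" where
  "sas_region G \<Omega>1 \<Omega>2 = {v \<in> verts G. \<exists>\<sigma>1. strategy G (V1 G) \<sigma>1 \<and>
      Out G v \<sigma>1 \<subseteq> {\<rho>. parity \<Omega>1 \<rho>} \<and>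
      (\<forall>\<sigma>2. strategy G (V2 G) \<sigma>2 \<longrightarrow> measure (Pr G v \<sigma>1 \<sigma>2) {\<rho>. parity \<Omega>2 \<rho>} = 1)}"

definition PosPre2 :: "'v game \<Rightarrow> 'v set \<Rightarrow> 'v set" where
  "PosPre2 G U = {v \<in> V2 G \<union> Vp G. succs G v \<inter> U \<noteq> {}} \<union> {v \<in> V1 G. succs G v \<subseteq> U}"

definition PosAttr2 :: "'v game \<Rightarrow> 'v set \<Rightarrow> 'v set" where
  "PosAttr2 G T = lfp (\<lambda>X. PosPre2 G X \<union> T)"

text \<open>Subgame restricted to the vertex set B (edges restricted to B, probability
  distributions conditioned on B; for a trap this leaves them unchanged).\<close>
definition restrict_game :: "'v game \<Rightarrow> 'v set \<Rightarrow> 'v game" where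
  "restrict_game G B =
     \<lparr> verts = verts G \<inter> B, V1 = V1 G \<inter> B, V2 = V2 G \<inter> B, Vp = Vp G \<inter> B,
       edges = edges G \<inter> (B \<times> B), delta = (\<lambda>v. cond_pmf (delta G v) B) \<rparr>"

end

(*
  If Player 1 wins sure-almost-surely from a vertex of the trap B in the subgame, the same
  strategy wins from that vertex in G: inside B, Player 2 and chance cannot leave B, so the plays
  and the probabilities of all histories are the same in both games.

  Conversely, let sigma1 win sure-almost-surely from v in G.  From every vertex of
  A = PosAttr2 (V(Omega1, d)), every strategy of Player 1 admits a consistent continuation that
  reaches priority d.  So if every sigma1-consistent history could be continued into A, there
  would be a play consistent with sigma1 visiting the maximal priority d infinitely often, which
  loses Parity(Omega1) because d is odd.  Hence some consistent history hb @ [u] has all its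
  consistent continuations in B.  Playing sigma1 as if hb had been played before wins from u in
  the subgame: prefixed with hb, its plays are plays of sigma1 in G, and its play measure is the
  play measure of G conditioned on the cylinder of hb @ [u] (which has positive probability once
  Player 2 replays that history) and shifted by the length of hb.  Both parity objectives are
  prefix-independent.
*)

theory Submission
  imports Defs
begin

lemma in_sstart_UNIV: "\<rho> \<in> sstart UNIV h \<longleftrightarrow> (\<forall>i<length h. \<rho> !! i = h ! i)"
  by (rule sstart_eq) simp

lemma disjoint_family_on_sstart: "disjoint_family_on (sstart UNIV) {h. length h = n}"
  unfolding disjoint_family_on_def
proof (intro ballI impI)
  fix h h' assume "h \<in> {h. length h = n}" "h' \<in> {h. length h = n}" "h \<noteq> h'"
  moreover have "h = h'" if "\<rho> \<in> sstart UNIV h" "\<rho> \<in> sstart UNIV h'" "length h = length h'" for \<rho>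
    using that by (intro nth_equalityI) (auto simp: in_sstart_UNIV)
  ultimately show "sstart UNIV h \<inter> sstart UNIV h' = {}" by auto
qed

lemma sstart_eq_inter_streams: "set xs \<subseteq> S \<Longrightarrow> sstart S xs = sstart UNIV xs \<inter> streams S"
proof (intro set_eqI iffI)
  fix \<rho> assume "set xs \<subseteq> S" "\<rho> \<in> sstart S xs"
  moreover have "\<rho> \<in> streams S" using sstart_in_streams[of xs S] calculation by auto
  ultimately show "\<rho> \<in> sstart UNIV xs \<inter> streams S" by (simp add: sstart_eq in_sstart_UNIV)
qed (simp add: sstart_eq in_sstart_UNIV)

lemma last_stake_Suc: "last (stake (Suc i) \<rho>) = \<rho> !! i"
  by (simp only: stake_Suc last_snoc)

lemma snth_smap_nats_limit:
  assumes extend: "\<And>n. \<exists>z. H (Suc n) = H n @ z" and long: "\<And>n. n < length (H n)"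
    and i: "i < length (H n)"
  shows "smap (\<lambda>i. H i ! i) nats !! i = H n ! i"
proof -
  have prefix: "take (length (H m)) (H n) = H m" if "m \<le> n" for m n
    using that
  proof (induction n)
    case (Suc n)
    show ?case
    proof (cases "m = Suc n")
      case False
      then have H_m: "take (length (H m)) (H n) = H m" using Suc by simp
      then have "length (H m) \<le> length (H n)" by (metis length_take min.absorb_iff1 min.absorb_iff2)
      then show ?thesis using H_m extend[of n] by auto
    qed simp
  qed simp
  have "H m ! i = H n ! i" if "m \<le> n" "i < length (H m)" for m n
    using prefix[OF that(1)] that(2) by (metis nth_take)
  then show ?thesis
    using i long[of i] by (cases "i \<le> n") (simp_all, metis nat_le_linear)
qed

section \<open>Path measures of history-dependent kernels\<close>

definition into_support :: "'a pmf \<Rightarrow> 'a \<Rightarrow> 'a" where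
  "into_support p x = (if x \<in> set_pmf p then x else (SOME y. y \<in> set_pmf p))"

lemma into_support_in_set_pmf: "into_support p x \<in> set_pmf p"
  unfolding into_support_def using set_pmf_not_empty[of p] by (auto intro: someI_ex)

lemma emeasure_into_support_eq: "emeasure (measure_pmf p) {x. into_support p x = w} = pmf p w"
proof -
  have "emeasure (measure_pmf p) {x. into_support p x = w} = emeasure (measure_pmf p) {w}"
    by (rule emeasure_eq_AE) (auto simp: AE_measure_pmf_iff into_support_def)
  then show ?thesis by (simp add: emeasure_pmf_single)
qed

text \<open>A path of the history-dependent kernel K is driven by a stream of choice functions: the
  n-th function, applied to the current history, yields the next element.  Projecting its value
  into the support keeps the reachable elements countable, which makes the path measurable.\<close>

primcorec kernel_path :: "('a list \<Rightarrow> 'a pmf) \<Rightarrow> 'a list \<Rightarrow> ('a list \<Rightarrow> 'a) stream \<Rightarrow> 'a stream" where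
  "shd (kernel_path K h fs) = into_support (K h) (shd fs h)"
| "stl (kernel_path K h fs) = kernel_path K (h @ [into_support (K h) (shd fs h)]) (stl fs)"

definition choice_space :: "('a list \<Rightarrow> 'a pmf) \<Rightarrow> ('a list \<Rightarrow> 'a) measure" where
  "choice_space K = PiM UNIV (\<lambda>h. measure_pmf (K h))"

abbreviation choice_streams :: "('a list \<Rightarrow> 'a pmf) \<Rightarrow> ('a list \<Rightarrow> 'a) stream measure" where
  "choice_streams K \<equiv> stream_space (choice_space K)"

lemma prob_space_choice_space: "prob_space (choice_space K)"
  unfolding choice_space_def by (rule prob_space_PiM) (rule prob_space_measure_pmf)

lemma prob_space_choice_streams: "prob_space (choice_streams K)"
  using prob_space_choice_space by (rule prob_space.prob_space_stream_space)

lemma space_choice_space: "space (choice_space K) = UNIV"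
  unfolding choice_space_def by (simp add: space_PiM)

lemma measurable_choice_component: "(\<lambda>f. f h) \<in> measurable (choice_space K) (measure_pmf (K h))"
  unfolding choice_space_def by (rule measurable_component_singleton) simp

lemma emeasure_choice_component:
  "emeasure (choice_space K) {f. P (f h)} = emeasure (measure_pmf (K h)) {x. P x}"
proof -
  interpret product_prob_space "\<lambda>h. measure_pmf (K h)" UNIV by unfold_locales
  have "emeasure (choice_space K) {f. P (f h)} =
      emeasure (distr (choice_space K) (measure_pmf (K h)) (\<lambda>f. f h)) {x. P x}"
    using measurable_choice_component[of h K] by (subst emeasure_distr) (auto simp: space_choice_space vimage_def)
  also have "distr (choice_space K) (measure_pmf (K h)) (\<lambda>f. f h) = measure_pmf (K h)"
    unfolding choice_space_def by (rule PiM_component) simp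
  finally show ?thesis .
qed

lemma measurable_kernel_path_shd:
  "(\<lambda>fs. into_support (K h) (shd fs h)) \<in> measurable (choice_streams K) (count_space UNIV)"
proof -
  have "(\<lambda>fs. shd fs h) \<in> measurable (choice_streams K) (measure_pmf (K h))"
    using measurable_shd measurable_choice_component by (rule measurable_compose)
  then show ?thesis by (rule measurable_compose) simp
qed

lemma emeasure_choice_streams_step:
  assumes X: "X \<in> sets (choice_streams K)"
  shows "emeasure (choice_streams K) {fs \<in> space (choice_streams K). into_support (K h) (shd fs h) = w \<and> stl fs \<in> X} =
    emeasure (choice_streams K) X * pmf (K h) w"
proof -
  interpret F: prob_space "choice_space K" by (rule prob_space_choice_space)
  let ?S = "choice_streams K" and ?W = "{f \<in> space (choice_space K). into_support (K h) (f h) = w}"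
  have "(\<lambda>f. into_support (K h) (f h)) \<in> measurable (choice_space K) (count_space UNIV)"
    using measurable_choice_component by (rule measurable_compose) simp
  then have W: "?W \<in> sets (choice_space K)" by measurable
  have "{fs \<in> space ?S. into_support (K h) (shd fs h) = w \<and> stl fs \<in> X} \<in> sets ?S"
    using measurable_kernel_path_shd[of K h] X by measurable
  then have "emeasure ?S {fs \<in> space ?S. into_support (K h) (shd fs h) = w \<and> stl fs \<in> X} =
      (\<integral>\<^sup>+f. emeasure ?S {x \<in> space ?S. f ## x \<in> {fs \<in> space ?S. into_support (K h) (shd fs h) = w \<and> stl fs \<in> X}}
        \<partial>choice_space K)"
    by (rule F.emeasure_stream_space)
  also have "\<dots> = (\<integral>\<^sup>+f. emeasure ?S X * indicator ?W f \<partial>choice_space K)"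
    using sets.sets_into_space[OF X]
    by (intro nn_integral_cong, rename_tac f, case_tac "into_support (K h) (f h) = w")
      (auto simp: space_stream_space space_choice_space intro!: arg_cong2[where f=emeasure])
  also have "\<dots> = emeasure ?S X * emeasure (choice_space K) ?W"
    using W by (rule nn_integral_cmult_indicator)
  also have "emeasure (choice_space K) ?W = pmf (K h) w"
    using emeasure_choice_component[of K "\<lambda>x. into_support (K h) x = w" h] emeasure_into_support_eq
    by (simp add: space_choice_space)
  finally show ?thesis .
qed

lemma kernel_path_cylinder:
  "{fs \<in> space (choice_streams K). kernel_path K h fs \<in> sstart UNIV ws} \<in> sets (choice_streams K) \<and>
   emeasure (choice_streams K) {fs \<in> space (choice_streams K). kernel_path K h fs \<in> sstart UNIV ws} =
     ennreal (\<Prod>i<length ws. pmf (K (h @ take i ws)) (ws ! i))"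
proof (induction ws arbitrary: h)
  case Nil
  interpret S: prob_space "choice_streams K" by (rule prob_space_choice_streams)
  show ?case by (simp add: S.emeasure_space_1)
next
  case (Cons w ws)
  let ?S = "choice_streams K"
  let ?X = "{fs \<in> space ?S. kernel_path K (h @ [w]) fs \<in> sstart UNIV ws}"
  have X: "?X \<in> sets ?S" using Cons.IH by blast
  have eq: "{fs \<in> space ?S. kernel_path K h fs \<in> sstart UNIV (w # ws)} =
      {fs \<in> space ?S. into_support (K h) (shd fs h) = w \<and> stl fs \<in> ?X}"
    by (auto simp: space_stream_space streams_stl)
  have "{fs \<in> space ?S. into_support (K h) (shd fs h) = w \<and> stl fs \<in> ?X} \<in> sets ?S"
    using measurable_kernel_path_shd[of K h] X by measurable
  moreover have "ennreal (\<Prod>i<length ws. pmf (K ((h @ [w]) @ take i ws)) (ws ! i)) * ennreal (pmf (K h) w) =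
      ennreal (\<Prod>i<length (w # ws). pmf (K (h @ take i (w # ws))) ((w # ws) ! i))"
    by (simp only: length_Cons prod.lessThan_Suc_shift)
      (simp add: ennreal_mult'[symmetric] mult.commute prod_nonneg del: prod.lessThan_Suc)
  ultimately show ?case
    using eq emeasure_choice_streams_step[OF X, of h w] Cons.IH by simp
qed

fun kernel_reach :: "('a list \<Rightarrow> 'a pmf) \<Rightarrow> 'a list \<Rightarrow> nat \<Rightarrow> 'a set" where
  "kernel_reach K h 0 = set_pmf (K h)"
| "kernel_reach K h (Suc n) = (\<Union>w\<in>set_pmf (K h). kernel_reach K (h @ [w]) n)"

lemma countable_kernel_reach: "countable (kernel_reach K h n)"
  by (induction n arbitrary: h) auto

lemma kernel_path_snth_in_reach: "kernel_path K h fs !! n \<in> kernel_reach K h n"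
  by (induction n arbitrary: h fs)
    (auto simp: into_support_in_set_pmf intro!: bexI[of _ "into_support (K h) (shd fs h)" for h fs])

lemma sets_kernel_path_snth_eq:
  "{fs \<in> space (choice_streams K). kernel_path K h fs !! n = a} \<in> sets (choice_streams K)"
proof (induction n arbitrary: h)
  case 0
  show ?case using measurable_kernel_path_shd[of K h] by simp measurable
next
  case (Suc n)
  let ?S = "choice_streams K"
  have "{fs \<in> space ?S. kernel_path K h fs !! Suc n = a} =
    (\<Union>w\<in>set_pmf (K h). {fs \<in> space ?S. into_support (K h) (shd fs h) = w \<and>
        stl fs \<in> {fs \<in> space ?S. kernel_path K (h @ [w]) fs !! n = a}})"
    using into_support_in_set_pmf by (auto simp: space_stream_space streams_stl)
  also have "\<dots> \<in> sets ?S"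
  proof (rule sets.countable_UN'[OF countable_set_pmf], safe)
    fix w
    note Suc.IH[of "h @ [w]"] measurable_kernel_path_shd[of K h]
    then show "{fs \<in> space ?S. into_support (K h) (shd fs h) = w \<and>
        stl fs \<in> {fs \<in> space ?S. kernel_path K (h @ [w]) fs !! n = a}} \<in> sets ?S"
      by measurable
  qed
  finally show ?case .
qed

lemma measurable_kernel_path_snth:
  "(\<lambda>fs. kernel_path K h fs !! n) \<in> measurable (choice_streams K) (count_space UNIV)"
proof -
  have "(\<lambda>fs. kernel_path K h fs !! n) \<in> measurable (choice_streams K) (count_space (kernel_reach K h n))"
  proof (rule iffD2[OF measurable_count_space_eq_countable[OF countable_kernel_reach]], intro conjI ballI)
    show "(\<lambda>fs. kernel_path K h fs !! n) \<in> space (choice_streams K) \<rightarrow> kernel_reach K h n"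
      using kernel_path_snth_in_reach by blast
    fix a
    have "(\<lambda>fs. kernel_path K h fs !! n) -` {a} \<inter> space (choice_streams K) =
        {fs \<in> space (choice_streams K). kernel_path K h fs !! n = a}"
      by blast
    then show "(\<lambda>fs. kernel_path K h fs !! n) -` {a} \<inter> space (choice_streams K) \<in> sets (choice_streams K)"
      using sets_kernel_path_snth_eq[of K h n a] by (simp only:)
  qed
  then show ?thesis by (rule measurable_compose) simp
qed

lemma measurable_kernel_path:
  "(\<lambda>fs. v ## kernel_path K h fs) \<in> measurable (choice_streams K) (stream_space (count_space UNIV))"
  by (rule measurable_Stream) (auto intro: measurable_stream_space2 measurable_kernel_path_snth)

lemma kernel_path_measure_exists:
  "\<exists>M. prob_space M \<and> sets M = sets (stream_space (count_space UNIV)) \<and>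
     (\<forall>x. x \<noteq> [] \<longrightarrow> emeasure M (sstart UNIV x) =
        ennreal (if x ! 0 = v then \<Prod>i<length x - 1. pmf (K (take (Suc i) x)) (x ! Suc i) else 0))"
proof (intro exI conjI allI impI)
  let ?f = "\<lambda>fs. v ## kernel_path K [v] fs"
  let ?M = "distr (choice_streams K) (stream_space (count_space UNIV)) ?f"
  interpret S: prob_space "choice_streams K" by (rule prob_space_choice_streams)
  show "prob_space ?M" using measurable_kernel_path by (rule S.prob_space_distr)
  show "sets ?M = sets (stream_space (count_space UNIV))" by simp
  fix x :: "'a list" assume "x \<noteq> []"
  then obtain w ws where x: "x = w # ws" by (cases x) auto
  have "emeasure ?M (sstart UNIV x) = emeasure (choice_streams K) (?f -` sstart UNIV x \<inter> space (choice_streams K))"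
    using measurable_kernel_path by (rule emeasure_distr) simp
  also have "?f -` sstart UNIV x \<inter> space (choice_streams K) =
      (if w = v then {fs \<in> space (choice_streams K). kernel_path K [v] fs \<in> sstart UNIV ws} else {})"
    using x by (auto simp: space_stream_space)
  finally show "emeasure ?M (sstart UNIV x) =
      ennreal (if x ! 0 = v then \<Prod>i<length x - 1. pmf (K (take (Suc i) x)) (x ! Suc i) else 0)"
    using kernel_path_cylinder[of K "[v]" ws] x by simp
qed

section \<open>The play measure\<close>

lemma
  assumes "stoch_game G"
  shows stoch_game_finite: "finite (verts G)"
    and stoch_game_partition: "V1 G \<union> V2 G \<union> Vp G = verts G"
    and stoch_game_disjoint: "V1 G \<inter> V2 G = {}" "V1 G \<inter> Vp G = {}" "V2 G \<inter> Vp G = {}"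
    and stoch_game_edges: "edges G \<subseteq> verts G \<times> verts G"
    and stoch_game_succs_verts: "w \<in> succs G x \<Longrightarrow> x \<in> verts G \<and> w \<in> verts G"
    and stoch_game_succs_nonempty: "x \<in> verts G \<Longrightarrow> succs G x \<noteq> {}"
    and stoch_game_set_pmf_delta: "x \<in> Vp G \<Longrightarrow> set_pmf (delta G x) = succs G x"
  using assms unfolding stoch_game_def succs_def by auto

lemma strategyD: "strategy G Vi \<sigma> \<Longrightarrow> h \<noteq> [] \<Longrightarrow> last h \<in> Vi \<Longrightarrow> \<sigma> h \<in> succs G (last h)"
  unfolding strategy_def by blast

lemma prod_lessThan_cong_until_zero:
  fixes a b :: "nat \<Rightarrow> 'a :: comm_semiring_1"
  assumes "\<And>i. i < n \<Longrightarrow> (\<forall>j<i. a j \<noteq> 0) \<Longrightarrow> a i = b i"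
  shows "(\<Prod>i<n. a i) = (\<Prod>i<n. b i)"
proof (cases "\<exists>j<n. a j = 0")
  case False
  then show ?thesis using assms by (intro prod.cong) auto
next
  case True
  define j where "j = (LEAST j. a j = 0)"
  have aj: "a j = 0" unfolding j_def using True by (auto intro: LeastI)
  have jn: "j < n" unfolding j_def using True by (auto intro: Least_le le_less_trans)
  have "\<forall>i<j. a i \<noteq> 0" unfolding j_def using not_less_Least by blast
  then have "b j = 0" using assms[OF jn] aj by simp
  then show ?thesis using aj jn prod_zero[of "{..<n}" a] prod_zero[of "{..<n}" b] by (metis finite_lessThan lessThan_iff)
qed

lemma trans_prob_nonneg: "trans_prob G \<sigma>1 \<sigma>2 h w \<ge> 0"
  unfolding trans_prob_def by auto

lemma hist_prob_nonneg: "hist_prob G v \<sigma>1 \<sigma>2 h \<ge> 0"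
  unfolding hist_prob_def by (auto intro!: prod_nonneg trans_prob_nonneg)

lemma hist_prob_single: "hist_prob G v \<sigma>1 \<sigma>2 [w] = (if w = v then 1 else 0)"
  unfolding hist_prob_def by simp

lemma succs_if_trans_prob_nonzero:
  assumes "stoch_game G" "strategy G (V1 G) \<sigma>1" "strategy G (V2 G) \<sigma>2" "h \<noteq> []"
    and "trans_prob G \<sigma>1 \<sigma>2 h w \<noteq> 0"
  shows "w \<in> succs G (last h)"
  using assms(5) strategyD[OF assms(2,4)] strategyD[OF assms(3,4)] stoch_game_set_pmf_delta[OF assms(1)]
  unfolding trans_prob_def by (auto split: if_splits simp flip: set_pmf_iff)

lemma hist_prob_snoc:
  assumes "h \<noteq> []"
  shows "hist_prob G v \<sigma>1 \<sigma>2 (h @ [w]) = hist_prob G v \<sigma>1 \<sigma>2 h * trans_prob G \<sigma>1 \<sigma>2 h w"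
proof -
  obtain n where n: "length h = Suc n" using assms by (cases h) auto
  have "(\<Prod>i<n. trans_prob G \<sigma>1 \<sigma>2 (take (Suc i) (h @ [w])) ((h @ [w]) ! Suc i)) =
      (\<Prod>i<n. trans_prob G \<sigma>1 \<sigma>2 (take (Suc i) h) (h ! Suc i))"
    using n by (intro prod.cong) (auto simp: nth_append)
  then show ?thesis
    using assms n unfolding hist_prob_def by (simp add: nth_append)
qed

lemma hist_prob_append:
  assumes "y \<noteq> []"
  shows "hist_prob G v \<sigma>1 \<sigma>2 (y @ x) =
    hist_prob G v \<sigma>1 \<sigma>2 y * (\<Prod>i<length x. trans_prob G \<sigma>1 \<sigma>2 (y @ take i x) (x ! i))"
proof (induction x rule: rev_induct)
  case (snoc w x)
  have "(\<Prod>i<length x. trans_prob G \<sigma>1 \<sigma>2 (y @ take i (x @ [w])) ((x @ [w]) ! i)) =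
      (\<Prod>i<length x. trans_prob G \<sigma>1 \<sigma>2 (y @ take i x) (x ! i))"
    by (intro prod.cong) (auto simp: nth_append)
  then show ?case
    using snoc hist_prob_snoc[of "y @ x" G v \<sigma>1 \<sigma>2 w] assms by (simp add: mult.assoc)
qed simp

lemma sum_trans_prob:
  assumes G: "stoch_game G" and s: "strategy G (V1 G) \<sigma>1" "strategy G (V2 G) \<sigma>2"
    and h: "h \<noteq> []" "last h \<in> verts G"
  shows "(\<Sum>w\<in>verts G. trans_prob G \<sigma>1 \<sigma>2 h w) = 1"
proof -
  note fin = stoch_game_finite[OF G] and succs = stoch_game_succs_verts[OF G]
  consider "last h \<in> V1 G" | "last h \<notin> V1 G" "last h \<in> V2 G" | "last h \<notin> V1 G" "last h \<notin> V2 G" "last h \<in> Vp G"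
    using h stoch_game_partition[OF G] by blast
  then show ?thesis
  proof cases
    case 1
    then have "\<sigma>1 h \<in> verts G" using strategyD[OF s(1) h(1)] succs by blast
    then show ?thesis using 1 fin unfolding trans_prob_def by simp
  next
    case 2
    then have "\<sigma>2 h \<in> verts G" using strategyD[OF s(2) h(1)] succs by blast
    then show ?thesis using 2 fin unfolding trans_prob_def by simp
  next
    case 3
    have "set_pmf (delta G (last h)) \<subseteq> verts G" using 3 stoch_game_set_pmf_delta[OF G] succs by blast
    then show ?thesis using 3 fin sum_pmf_eq_1 unfolding trans_prob_def by simp
  qed
qed

lemma lists_length_Suc_snoc_eq:
  "{h. set h \<subseteq> S \<and> length h = Suc n} = (\<lambda>(h, w). h @ [w]) ` ({h. set h \<subseteq> S \<and> length h = n} \<times> S)"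
proof (intro set_eqI iffI)
  fix x assume "x \<in> {h. set h \<subseteq> S \<and> length h = Suc n}"
  then obtain y ys where "x = ys @ [y]" "length ys = n" "set x \<subseteq> S"
    by (auto simp: length_Suc_conv_rev)
  then show "x \<in> (\<lambda>(h, w). h @ [w]) ` ({h. set h \<subseteq> S \<and> length h = n} \<times> S)"
    by (auto intro!: image_eqI[of _ _ "(ys, y)"])
qed auto

lemma sum_hist_prob:
  assumes G: "stoch_game G" and s: "strategy G (V1 G) \<sigma>1" "strategy G (V2 G) \<sigma>2" and v: "v \<in> verts G"
  shows "(\<Sum>h\<in>{h. set h \<subseteq> verts G \<and> length h = Suc n}. hist_prob G v \<sigma>1 \<sigma>2 h) = 1"
proof (induction n)
  case 0
  have "{h. set h \<subseteq> verts G \<and> length h = Suc 0} = (\<lambda>w. [w]) ` verts G"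
    by (auto simp: length_Suc_conv)
  then show ?case
    using stoch_game_finite[OF G] v by (simp add: sum.reindex inj_on_def hist_prob_single)
next
  case (Suc n)
  let ?L = "{h. set h \<subseteq> verts G \<and> length h = Suc n}"
  have inj: "inj_on (\<lambda>(h, w). h @ [w]) (?L \<times> verts G)" by (auto simp: inj_on_def)
  have "(\<Sum>h\<in>{h. set h \<subseteq> verts G \<and> length h = Suc (Suc n)}. hist_prob G v \<sigma>1 \<sigma>2 h) =
      (\<Sum>(h, w)\<in>?L \<times> verts G. hist_prob G v \<sigma>1 \<sigma>2 (h @ [w]))"
    unfolding lists_length_Suc_snoc_eq[of _ "Suc n"] by (subst sum.reindex[OF inj]) (simp add: case_prod_unfold)
  also have "\<dots> = (\<Sum>h\<in>?L. \<Sum>w\<in>verts G. hist_prob G v \<sigma>1 \<sigma>2 h * trans_prob G \<sigma>1 \<sigma>2 h w)"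
    by (subst sum.cartesian_product[symmetric]) (auto intro!: sum.cong hist_prob_snoc)
  also have "\<dots> = (\<Sum>h\<in>?L. hist_prob G v \<sigma>1 \<sigma>2 h)"
  proof (rule sum.cong[OF refl])
    fix h assume h: "h \<in> ?L"
    then have "h \<noteq> []" "set h \<subseteq> verts G" by auto
    then have "h \<noteq> []" "last h \<in> verts G" using last_in_set by blast+
    then show "(\<Sum>w\<in>verts G. hist_prob G v \<sigma>1 \<sigma>2 h * trans_prob G \<sigma>1 \<sigma>2 h w) = hist_prob G v \<sigma>1 \<sigma>2 h"
      using sum_trans_prob[OF G s] by (simp add: sum_distrib_left[symmetric])
  qed
  finally show ?case using Suc.IH by simp
qed

definition play_measure :: "'v game \<Rightarrow> 'v \<Rightarrow> ('v list \<Rightarrow> 'v) \<Rightarrow> ('v list \<Rightarrow> 'v) \<Rightarrow> 'v stream measure \<Rightarrow> bool" where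
  "play_measure G v \<sigma>1 \<sigma>2 M \<longleftrightarrow> prob_space M \<and> sets M = sets (stream_space (count_space UNIV)) \<and>
      (\<forall>h. h \<noteq> [] \<longrightarrow> emeasure M (sstart UNIV h) = ennreal (hist_prob G v \<sigma>1 \<sigma>2 h))"

lemma AE_play_measure_streams_verts:
  assumes G: "stoch_game G" and s: "strategy G (V1 G) \<sigma>1" "strategy G (V2 G) \<sigma>2" and v: "v \<in> verts G"
    and M: "play_measure G v \<sigma>1 \<sigma>2 M"
  shows "AE \<rho> in M. \<rho> \<in> streams (verts G)"
proof -
  interpret M: prob_space M using M unfolding play_measure_def by blast
  have sets: "sets M = sets (stream_space (count_space UNIV))"
    and cyl: "\<And>h. h \<noteq> [] \<Longrightarrow> emeasure M (sstart UNIV h) = ennreal (hist_prob G v \<sigma>1 \<sigma>2 h)"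
    using M unfolding play_measure_def by blast+
  define L where "L n = {h. set h \<subseteq> verts G \<and> length h = Suc n}" for n
  have finL: "finite (L n)" for n
    unfolding L_def by (rule finite_lists_length_eq[OF stoch_game_finite[OF G]])
  have "AE \<rho> in M. \<rho> \<in> (\<Union>h\<in>L n. sstart UNIV h)" for n
  proof -
    have cyl_sets: "sstart UNIV ` L n \<subseteq> sets M" using sets by (simp add: image_subset_iff)
    have disj: "disjoint_family_on (sstart UNIV) (L n)"
      by (rule disjoint_family_on_mono[OF _ disjoint_family_on_sstart]) (auto simp: L_def)
    have "emeasure M (\<Union>h\<in>L n. sstart UNIV h) = (\<Sum>h\<in>L n. emeasure M (sstart UNIV h))"
      by (rule sum_emeasure[OF cyl_sets disj finL, symmetric])
    also have "\<dots> = (\<Sum>h\<in>L n. ennreal (hist_prob G v \<sigma>1 \<sigma>2 h))"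
      by (rule sum.cong[OF refl], rule cyl) (auto simp: L_def)
    also have "\<dots> = ennreal (\<Sum>h\<in>L n. hist_prob G v \<sigma>1 \<sigma>2 h)"
      by (rule sum_ennreal) (rule hist_prob_nonneg)
    also have "\<dots> = 1" unfolding L_def using sum_hist_prob[OF G s v] by simp
    finally have "emeasure M (\<Union>h\<in>L n. sstart UNIV h) = 1" .
    moreover have inS: "(\<Union>h\<in>L n. sstart UNIV h) \<in> sets M"
      using cyl_sets by (intro sets.finite_UN[OF finL]) blast
    ultimately show ?thesis using M.AE_in_set_eq_1[OF inS] by (simp add: M.emeasure_eq_measure)
  qed
  then have "AE \<rho> in M. \<forall>n. \<rho> \<in> (\<Union>h\<in>L n. sstart UNIV h)" by (simp add: AE_all_countable)
  then show ?thesis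
  proof eventually_elim
    case (elim \<rho>)
    show "\<rho> \<in> streams (verts G)" unfolding streams_iff_snth
    proof
      fix n
      from elim obtain h where "h \<in> L n" "\<rho> \<in> sstart UNIV h" by blast
      then show "\<rho> !! n \<in> verts G" unfolding L_def by (auto simp: in_sstart_UNIV)
    qed
  qed
qed

lemma play_measure_unique:
  assumes G: "stoch_game G" and s: "strategy G (V1 G) \<sigma>1" "strategy G (V2 G) \<sigma>2" and v: "v \<in> verts G"
    and M: "play_measure G v \<sigma>1 \<sigma>2 M" and N: "play_measure G v \<sigma>1 \<sigma>2 N"
  shows "M = N"
proof (rule stream_space_eq_sstart[of "verts G"])
  show "countable (verts G)" using stoch_game_finite[OF G] by (rule countable_finite)
  show "prob_space M" "prob_space N" "sets M = sets (stream_space (count_space UNIV))"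
    "sets N = sets (stream_space (count_space UNIV))"
    using M N unfolding play_measure_def by blast+
  show "AE x in M. x \<in> streams (verts G)" "AE x in N. x \<in> streams (verts G)"
    using AE_play_measure_streams_verts[OF G s v M] AE_play_measure_streams_verts[OF G s v N] .
  have streams: "streams (verts G) \<in> sets (stream_space (count_space UNIV))"
    by (rule streams_sets) simp
  fix xs assume xs: "xs \<noteq> []" "xs \<in> lists (verts G)"
  have cylinder: "emeasure M' (sstart (verts G) xs) = ennreal (hist_prob G v \<sigma>1 \<sigma>2 xs)"
    if M': "play_measure G v \<sigma>1 \<sigma>2 M'" for M'
  proof -
    have "AE x in M'. x \<in> sstart UNIV xs \<inter> streams (verts G) \<longleftrightarrow> x \<in> sstart UNIV xs"
      using AE_play_measure_streams_verts[OF G s v M'] by eventually_elim blast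
    moreover have "sets M' = sets (stream_space (count_space UNIV))"
      using M' unfolding play_measure_def by blast
    ultimately have "emeasure M' (sstart UNIV xs \<inter> streams (verts G)) = emeasure M' (sstart UNIV xs)"
      using streams by (intro emeasure_eq_AE) simp_all
    moreover have "sstart (verts G) xs = sstart UNIV xs \<inter> streams (verts G)"
      using xs by (intro sstart_eq_inter_streams) auto
    ultimately show ?thesis
      using xs M' unfolding play_measure_def by simp
  qed
  then show "emeasure M (sstart (verts G) xs) = emeasure N (sstart (verts G) xs)"
    using cylinder[OF M] cylinder[OF N] by simp
qed

lemma Pr_eqI:
  assumes G: "stoch_game G" and s: "strategy G (V1 G) \<sigma>1" "strategy G (V2 G) \<sigma>2" and v: "v \<in> verts G"
    and M: "play_measure G v \<sigma>1 \<sigma>2 M"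
  shows "Pr G v \<sigma>1 \<sigma>2 = M"
proof -
  have "Pr G v \<sigma>1 \<sigma>2 = (THE M. play_measure G v \<sigma>1 \<sigma>2 M)"
    unfolding Pr_def play_measure_def ..
  also have "\<dots> = M"
    using M play_measure_unique[OF G s v _ M] by (rule the_equality)
  finally show ?thesis .
qed

text \<open>Off the vertex set, trans_prob is 0 while move_pmf is a distribution, so the two only agree
  along histories that stay in verts G.\<close>

definition move_pmf :: "'v game \<Rightarrow> ('v list \<Rightarrow> 'v) \<Rightarrow> ('v list \<Rightarrow> 'v) \<Rightarrow> 'v list \<Rightarrow> 'v pmf" where
  "move_pmf G \<sigma>1 \<sigma>2 h =
    (if last h \<in> V1 G then return_pmf (\<sigma>1 h) else if last h \<in> V2 G then return_pmf (\<sigma>2 h)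
     else if last h \<in> Vp G then delta G (last h) else return_pmf undefined)"

lemma trans_prob_eq_pmf_move:
  "stoch_game G \<Longrightarrow> last h \<in> verts G \<Longrightarrow> trans_prob G \<sigma>1 \<sigma>2 h w = pmf (move_pmf G \<sigma>1 \<sigma>2 h) w"
  unfolding trans_prob_def move_pmf_def stoch_game_def by (auto simp: indicator_def)

lemma prod_trans_prob_cong_invariant:
  assumes x: "Q [x ! 0]"
    and step: "\<And>h w. Q h \<Longrightarrow> trans_prob G \<sigma>1 \<sigma>2 h w \<noteq> 0 \<Longrightarrow> Q (h @ [w])"
    and eq: "\<And>h w. Q h \<Longrightarrow> trans_prob G \<sigma>1 \<sigma>2 h w = f h w"
  shows "(\<Prod>i<length x - 1. trans_prob G \<sigma>1 \<sigma>2 (take (Suc i) x) (x ! Suc i)) =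
    (\<Prod>i<length x - 1. f (take (Suc i) x) (x ! Suc i))"
proof (rule prod_lessThan_cong_until_zero)
  fix i assume i: "i < length x - 1"
    and nz: "\<forall>j<i. trans_prob G \<sigma>1 \<sigma>2 (take (Suc j) x) (x ! Suc j) \<noteq> 0"
  have "Q (take (Suc j) x)" if "j \<le> i" for j
    using that
  proof (induction j)
    case 0
    then show ?case using x i by (cases x) auto
  next
    case (Suc j)
    then have "Q (take (Suc j) x @ [x ! Suc j])" using step nz by simp
    then show ?case using Suc.prems i by (simp add: take_Suc_conv_app_nth)
  qed
  then show "trans_prob G \<sigma>1 \<sigma>2 (take (Suc i) x) (x ! Suc i) = f (take (Suc i) x) (x ! Suc i)"
    using eq by blast
qed

lemma hist_prob_eq_move_pmf:
  assumes G: "stoch_game G" and s: "strategy G (V1 G) \<sigma>1" "strategy G (V2 G) \<sigma>2" and v: "v \<in> verts G"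
  shows "hist_prob G v \<sigma>1 \<sigma>2 x =
    (if x ! 0 = v then \<Prod>i<length x - 1. pmf (move_pmf G \<sigma>1 \<sigma>2 (take (Suc i) x)) (x ! Suc i) else 0)"
  unfolding hist_prob_def
proof (intro if_cong refl prod_trans_prob_cong_invariant[where Q="\<lambda>h. h \<noteq> [] \<and> last h \<in> verts G"])
  show "x ! 0 = v \<Longrightarrow> [x ! 0] \<noteq> [] \<and> last [x ! 0] \<in> verts G" using v by simp
  show "h @ [w] \<noteq> [] \<and> last (h @ [w]) \<in> verts G"
    if "h \<noteq> [] \<and> last h \<in> verts G" "trans_prob G \<sigma>1 \<sigma>2 h w \<noteq> 0" for h w
    using that succs_if_trans_prob_nonzero[OF G s] stoch_game_succs_verts[OF G] by auto
  show "trans_prob G \<sigma>1 \<sigma>2 h w = pmf (move_pmf G \<sigma>1 \<sigma>2 h) w" if "h \<noteq> [] \<and> last h \<in> verts G" for h w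
    using that by (intro trans_prob_eq_pmf_move[OF G]) simp
qed

lemma play_measure_Pr:
  assumes G: "stoch_game G" and s: "strategy G (V1 G) \<sigma>1" "strategy G (V2 G) \<sigma>2" and v: "v \<in> verts G"
  shows "play_measure G v \<sigma>1 \<sigma>2 (Pr G v \<sigma>1 \<sigma>2)"
proof -
  obtain M where "prob_space M" "sets M = sets (stream_space (count_space UNIV))"
     "\<forall>x. x \<noteq> [] \<longrightarrow> emeasure M (sstart UNIV x) =
        ennreal (if x ! 0 = v then \<Prod>i<length x - 1. pmf (move_pmf G \<sigma>1 \<sigma>2 (take (Suc i) x)) (x ! Suc i) else 0)"
    using kernel_path_measure_exists[of v "move_pmf G \<sigma>1 \<sigma>2"] by blast
  then have "play_measure G v \<sigma>1 \<sigma>2 M"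
    unfolding play_measure_def using hist_prob_eq_move_pmf[OF G s v] by simp
  then show ?thesis using Pr_eqI[OF G s v] by simp
qed

section \<open>Parity and consistent histories\<close>

lemma parity_stl: "parity \<Omega> (stl \<rho>) \<longleftrightarrow> parity \<Omega> \<rho>"
proof -
  have "(\<exists>\<^sub>\<infinity>j. \<Omega> (stl \<rho> !! j) = p) \<longleftrightarrow> (\<exists>\<^sub>\<infinity>j. \<Omega> (\<rho> !! j) = p)" for p
    unfolding frequently_def using MOST_Suc_iff[of "\<lambda>j. \<Omega> (\<rho> !! j) \<noteq> p"] by simp
  moreover have "(\<forall>\<^sub>\<infinity>j. \<Omega> (stl \<rho> !! j) \<le> p) \<longleftrightarrow> (\<forall>\<^sub>\<infinity>j. \<Omega> (\<rho> !! j) \<le> p)" for p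
    using MOST_Suc_iff[of "\<lambda>j. \<Omega> (\<rho> !! j) \<le> p"] by simp
  ultimately show ?thesis unfolding parity_def by presburger
qed

lemma parity_shift: "parity \<Omega> (xs @- \<rho>) \<longleftrightarrow> parity \<Omega> \<rho>"
proof (induction xs)
  case (Cons x xs)
  then show ?case using parity_stl[of \<Omega> "(x # xs) @- \<rho>"] by simp
qed simp

lemma parity_sdrop: "parity \<Omega> (sdrop k \<rho>) \<longleftrightarrow> parity \<Omega> \<rho>"
  by (induction k arbitrary: \<rho>) (simp_all add: parity_stl)

lemma not_parity_if_max_odd_infinitely_often:
  assumes "\<forall>j. \<Omega> (\<rho> !! j) \<le> d" and "\<exists>\<^sub>\<infinity>j. \<Omega> (\<rho> !! j) = d" and "odd d"
  shows "\<not> parity \<Omega> \<rho>"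
proof
  assume "parity \<Omega> \<rho>"
  then obtain p where p: "even p" "\<exists>\<^sub>\<infinity>j. \<Omega> (\<rho> !! j) = p" "\<forall>\<^sub>\<infinity>j. \<Omega> (\<rho> !! j) \<le> p"
    unfolding parity_def by blast
  have "p \<le> d" using INFM_EX[OF p(2)] assms(1) by metis
  moreover have "d \<le> p" using INFM_EX[OF frequently_eventually_conj[OF assms(2) p(3)]] by auto
  ultimately show False using p(1) assms(3) by simp
qed

definition consistent :: "'v game \<Rightarrow> 'v \<Rightarrow> ('v list \<Rightarrow> 'v) \<Rightarrow> 'v list \<Rightarrow> bool" where
  "consistent G v \<sigma>1 y \<longleftrightarrow> y \<noteq> [] \<and> y ! 0 = v \<and>
     (\<forall>i. Suc i < length y \<longrightarrow>
        (y ! i, y ! Suc i) \<in> edges G \<and> (y ! i \<in> V1 G \<longrightarrow> y ! Suc i = \<sigma>1 (take (Suc i) y)))"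

lemma consistent_single: "consistent G v \<sigma>1 [v]"
  unfolding consistent_def by simp

lemma consistent_snoc:
  assumes y: "consistent G v \<sigma>1 y" and e: "(last y, w) \<in> edges G" and s: "last y \<in> V1 G \<longrightarrow> w = \<sigma>1 y"
  shows "consistent G v \<sigma>1 (y @ [w])"
  unfolding consistent_def
proof (intro conjI allI impI)
  have ne: "y \<noteq> []" and y0: "y ! 0 = v"
    and old: "\<And>i. Suc i < length y \<Longrightarrow>
      (y ! i, y ! Suc i) \<in> edges G \<and> (y ! i \<in> V1 G \<longrightarrow> y ! Suc i = \<sigma>1 (take (Suc i) y))"
    using y unfolding consistent_def by blast+
  show "y @ [w] \<noteq> []" "(y @ [w]) ! 0 = v" using ne y0 by (simp_all add: nth_append)
  fix i assume i: "Suc i < length (y @ [w])"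
  have "((y @ [w]) ! i, (y @ [w]) ! Suc i) \<in> edges G \<and>
    ((y @ [w]) ! i \<in> V1 G \<longrightarrow> (y @ [w]) ! Suc i = \<sigma>1 (take (Suc i) (y @ [w])))"
  proof (cases "Suc i < length y")
    case True
    then show ?thesis using old[of i] by (simp add: nth_append)
  next
    case False
    then have "i = length y - 1" using i by simp
    then have "(y @ [w]) ! i = last y" "(y @ [w]) ! Suc i = w" "take (Suc i) (y @ [w]) = y"
      using ne by (simp_all add: nth_append last_conv_nth)
    with e s show ?thesis by (simp only:)
  qed
  then show "((y @ [w]) ! i, (y @ [w]) ! Suc i) \<in> edges G"
    "(y @ [w]) ! i \<in> V1 G \<Longrightarrow> (y @ [w]) ! Suc i = \<sigma>1 (take (Suc i) (y @ [w]))"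
    by simp_all
qed

lemma consistent_prefix:
  assumes c: "consistent G v \<sigma>1 (y @ z)" and ne: "y \<noteq> []"
  shows "consistent G v \<sigma>1 y"
  unfolding consistent_def
proof (intro conjI allI impI)
  show "y \<noteq> []" "y ! 0 = v" using c ne unfolding consistent_def by (simp_all add: nth_append)
  fix i assume i: "Suc i < length y"
  then have "((y @ z) ! i, (y @ z) ! Suc i) \<in> edges G \<and>
      ((y @ z) ! i \<in> V1 G \<longrightarrow> (y @ z) ! Suc i = \<sigma>1 (take (Suc i) (y @ z)))"
    using c unfolding consistent_def by simp
  moreover have "(y @ z) ! i = y ! i" "(y @ z) ! Suc i = y ! Suc i" "take (Suc i) (y @ z) = take (Suc i) y"
    using i by (simp_all add: nth_append)
  ultimately show "(y ! i, y ! Suc i) \<in> edges G" "y ! i \<in> V1 G \<Longrightarrow> y ! Suc i = \<sigma>1 (take (Suc i) y)"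
    using i by simp_all
qed

lemma consistent_nth_verts:
  assumes "stoch_game G" "v \<in> verts G" "consistent G v \<sigma>1 y" "i < length y"
  shows "y ! i \<in> verts G"
  using assms stoch_game_edges[OF assms(1)] unfolding consistent_def
  by (cases i) (auto dest!: spec[of _ "i - 1"])

lemma consistent_last_verts:
  assumes "stoch_game G" "v \<in> verts G" "consistent G v \<sigma>1 y"
  shows "last y \<in> verts G"
  using consistent_nth_verts[OF assms, of "length y - 1"] assms(3)
  unfolding consistent_def by (simp add: last_conv_nth)

lemma consistent_snoc_exists:
  assumes G: "stoch_game G" and s1: "strategy G (V1 G) \<sigma>1" and v: "v \<in> verts G"
    and y: "consistent G v \<sigma>1 y"
  shows "\<exists>w. consistent G v \<sigma>1 (y @ [w])"
proof (cases "last y \<in> V1 G")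
  case True
  have "y \<noteq> []" using y unfolding consistent_def by blast
  then have "\<sigma>1 y \<in> succs G (last y)" using strategyD[OF s1] True by blast
  then show ?thesis using y by (intro exI consistent_snoc) (auto simp: succs_def)
next
  case False
  obtain w where "w \<in> succs G (last y)"
    using stoch_game_succs_nonempty[OF G consistent_last_verts[OF G v y]] by blast
  then show ?thesis using y False by (intro exI consistent_snoc) (auto simp: succs_def)
qed

lemma Out_if_consistent_stake:
  assumes "\<And>n. consistent G v \<sigma>1 (stake (Suc n) \<rho>)"
  shows "\<rho> \<in> Out G v \<sigma>1"
  unfolding Out_def
proof (intro CollectI conjI allI impI)
  show "\<rho> !! 0 = v" using assms[of 0] unfolding consistent_def by simp
  fix i
  have "Suc i < length (stake (Suc (Suc i)) \<rho>)" "take (Suc i) (stake (Suc (Suc i)) \<rho>) = stake (Suc i) \<rho>"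
    by (simp_all add: take_stake min_def del: stake.simps)
  then show "(\<rho> !! i, \<rho> !! Suc i) \<in> edges G" "\<rho> !! i \<in> V1 G \<Longrightarrow> \<rho> !! Suc i = \<sigma>1 (stake (Suc i) \<rho>)"
    using assms[of "Suc i"] unfolding consistent_def by (auto simp del: stake.simps)
qed

lemma Out_snth_verts: "stoch_game G \<Longrightarrow> \<rho> \<in> Out G v \<sigma>1 \<Longrightarrow> \<rho> !! j \<in> verts G"
  unfolding Out_def using stoch_game_edges by blast

section \<open>Leaving the positive attractor for good\<close>

lemma mono_PosPre2_Un: "mono (\<lambda>X. PosPre2 G X \<union> T)"
  unfolding mono_def PosPre2_def by blast

lemma PosAttr2_unfold: "PosAttr2 G T = PosPre2 G (PosAttr2 G T) \<union> T"
  unfolding PosAttr2_def using mono_PosPre2_Un by (rule lfp_unfold)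

lemma consistent_reaches_PosAttr2_target:
  assumes G: "stoch_game G" and s1: "strategy G (V1 G) \<sigma>1"
    and y: "consistent G v \<sigma>1 y" and x: "last y \<in> PosAttr2 G T"
  shows "\<exists>z. consistent G v \<sigma>1 (y @ z) \<and> last (y @ z) \<in> T"
proof -
  define P where "P x \<longleftrightarrow> (\<forall>y. consistent G v \<sigma>1 y \<and> last y = x \<longrightarrow>
      (\<exists>z. consistent G v \<sigma>1 (y @ z) \<and> last (y @ z) \<in> T))" for x
  have "P x" if "x \<in> lfp (\<lambda>X. PosPre2 G X \<union> T)" for x
    using that
  proof (rule lfp_induct_set[OF _ mono_PosPre2_Un])
    fix x assume x: "x \<in> PosPre2 G (lfp (\<lambda>X. PosPre2 G X \<union> T) \<inter> {x. P x}) \<union> T"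
    show "P x" unfolding P_def
    proof (intro allI impI)
      fix y assume y: "consistent G v \<sigma>1 y \<and> last y = x"
      have extend: "\<exists>z. consistent G v \<sigma>1 (y @ z) \<and> last (y @ z) \<in> T"
        if w: "w \<in> succs G x" "P w" "x \<in> V1 G \<longrightarrow> w = \<sigma>1 y" for w
      proof -
        have "consistent G v \<sigma>1 (y @ [w])" using y w(1,3) by (intro consistent_snoc) (auto simp: succs_def)
        then obtain z where "consistent G v \<sigma>1 (y @ [w] @ z)" "last (y @ [w] @ z) \<in> T"
          using w(2) unfolding P_def by fastforce
        then show ?thesis by (intro exI[of _ "w # z"]) simp
      qed
      have "y \<noteq> []" using y unfolding consistent_def by blast
      then have "x \<in> V1 G \<Longrightarrow> \<sigma>1 y \<in> succs G x" using strategyD[OF s1] y by blast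
      moreover have "x \<in> V2 G \<union> Vp G \<Longrightarrow> x \<notin> V1 G" using stoch_game_disjoint[OF G] by blast
      ultimately show "\<exists>z. consistent G v \<sigma>1 (y @ z) \<and> last (y @ z) \<in> T"
        using x extend y unfolding PosPre2_def by (fastforce intro: exI[of _ "[]"])
    qed
  qed
  then show ?thesis using x y unfolding P_def PosAttr2_def by blast
qed

lemma Out_visits_infinitely_often:
  assumes step: "\<And>y. consistent G v \<sigma>1 y \<Longrightarrow> \<exists>z. z \<noteq> [] \<and> consistent G v \<sigma>1 (y @ z) \<and> P (last (y @ z))"
  shows "\<exists>\<rho>\<in>Out G v \<sigma>1. \<exists>\<^sub>\<infinity>j. P (\<rho> !! j)"
proof -
  define next_hist where
    "next_hist y = (SOME z. z \<noteq> [] \<and> consistent G v \<sigma>1 (y @ z) \<and> P (last (y @ z)))" for y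
  have next_hist: "next_hist y \<noteq> [] \<and> consistent G v \<sigma>1 (y @ next_hist y) \<and> P (last (y @ next_hist y))"
    if "consistent G v \<sigma>1 y" for y
    unfolding next_hist_def by (rule someI_ex[OF step[OF that]])
  define H where "H = rec_nat [v] (\<lambda>_ y. y @ next_hist y)"
  have H_Suc: "H (Suc n) = H n @ next_hist (H n)" for n unfolding H_def by simp
  have H: "consistent G v \<sigma>1 (H n) \<and> Suc n \<le> length (H n)" for n
  proof (induction n)
    case 0 then show ?case using consistent_single by (simp add: H_def)
  next
    case (Suc n)
    then show ?case using next_hist[of "H n"] by (cases "next_hist (H n)") (auto simp: H_Suc)
  qed
  define \<rho> where "\<rho> = smap (\<lambda>i. H i ! i) nats"
  have \<rho>: "\<rho> !! i = H n ! i" if "i < length (H n)" for i n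
    unfolding \<rho>_def using H that by (intro snth_smap_nats_limit) (auto simp: H_Suc Suc_le_eq)
  have "\<rho> \<in> Out G v \<sigma>1"
  proof (rule Out_if_consistent_stake)
    fix n
    have "stake (Suc n) \<rho> = take (Suc n) (H n)"
      using H[of n] \<rho>[of _ n] by (intro nth_equalityI) (simp_all del: stake.simps)
    then show "consistent G v \<sigma>1 (stake (Suc n) \<rho>)"
      using consistent_prefix[of G v \<sigma>1 "take (Suc n) (H n)" "drop (Suc n) (H n)"] H[of n]
      by (cases "H n") (simp_all del: stake.simps)
  qed
  moreover have "\<exists>\<^sub>\<infinity>j. P (\<rho> !! j)"
    unfolding INFM_nat
  proof
    fix m
    have l: "Suc (Suc m) \<le> length (H (Suc m))" using H by blast
    then have "\<rho> !! (length (H (Suc m)) - 1) = last (H (Suc m))"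
      using \<rho>[of "length (H (Suc m)) - 1" "Suc m"] by (cases "H (Suc m)" rule: rev_exhaust) simp_all
    moreover have "P (last (H (Suc m)))" unfolding H_Suc using next_hist H by blast
    ultimately show "\<exists>j>m. P (\<rho> !! j)" using l by (intro exI[of _ "length (H (Suc m)) - 1"]) simp
  qed
  ultimately show ?thesis by blast
qed

lemma ex_consistent_history_confined:
  assumes G: "stoch_game G" and s1: "strategy G (V1 G) \<sigma>1" and v: "v \<in> verts G"
    and win: "Out G v \<sigma>1 \<subseteq> {\<rho>. parity \<Omega>1 \<rho>}"
    and d: "d = Max (\<Omega>1 ` verts G)" and odd: "odd d"
    and A: "A = PosAttr2 G {v \<in> verts G. \<Omega>1 v = d}" and B: "B = verts G - A"
  shows "\<exists>y. consistent G v \<sigma>1 y \<and> (\<forall>z. consistent G v \<sigma>1 (y @ z) \<longrightarrow> last (y @ z) \<in> B)"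
proof (rule ccontr)
  assume "\<nexists>y. consistent G v \<sigma>1 y \<and> (\<forall>z. consistent G v \<sigma>1 (y @ z) \<longrightarrow> last (y @ z) \<in> B)"
  then have escape: "\<exists>z. consistent G v \<sigma>1 (y @ z) \<and> last (y @ z) \<in> A" if "consistent G v \<sigma>1 y" for y
    using that consistent_last_verts[OF G v] unfolding B by blast
  have "\<exists>z. z \<noteq> [] \<and> consistent G v \<sigma>1 (y @ z) \<and> \<Omega>1 (last (y @ z)) = d"
    if y: "consistent G v \<sigma>1 y" for y
  proof -
    obtain w where w: "consistent G v \<sigma>1 (y @ [w])" using consistent_snoc_exists[OF G s1 v y] ..
    obtain z1 where z1: "consistent G v \<sigma>1 ((y @ [w]) @ z1)" "last ((y @ [w]) @ z1) \<in> A"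
      using escape[OF w] by blast
    obtain z2 where "consistent G v \<sigma>1 (((y @ [w]) @ z1) @ z2)" "\<Omega>1 (last (((y @ [w]) @ z1) @ z2)) = d"
      using consistent_reaches_PosAttr2_target[OF G s1 z1(1)] z1(2) unfolding A by blast
    then show ?thesis by (intro exI[of _ "w # z1 @ z2"]) simp
  qed
  then obtain \<rho> where \<rho>: "\<rho> \<in> Out G v \<sigma>1" "\<exists>\<^sub>\<infinity>j. \<Omega>1 (\<rho> !! j) = d"
    using Out_visits_infinitely_often[of G v \<sigma>1 "\<lambda>x. \<Omega>1 x = d"] by blast
  have "\<Omega>1 (\<rho> !! j) \<le> d" for j
    unfolding d using Out_snth_verts[OF G \<rho>(1)] stoch_game_finite[OF G] by (intro Max_ge) simp_all
  then show False using not_parity_if_max_odd_infinitely_often[OF _ \<rho>(2) odd] \<rho>(1) win by blast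
qed

section \<open>The trap subgame\<close>

lemma cond_pmf_superset: "set_pmf p \<subseteq> s \<Longrightarrow> cond_pmf p s = p"
proof (rule pmf_eqI)
  fix x assume sub: "set_pmf p \<subseteq> s"
  then have ne: "set_pmf p \<inter> s \<noteq> {}" using set_pmf_not_empty[of p] by blast
  have "measure (measure_pmf p) s = 1"
    using sub by (subst measure_pmf.prob_eq_1) (auto simp: AE_measure_pmf_iff)
  then show "pmf (cond_pmf p s) x = pmf p x"
    using sub pmf_cond[OF ne] by (auto simp: set_pmf_iff)
qed

locale attractor_trap =
  fixes G :: "'v game" and T A B :: "'v set"
  assumes game: "stoch_game G" and attractor: "A = PosAttr2 G T" and trap: "B = verts G - A"
begin

abbreviation subgame :: "'v game" where
  "subgame \<equiv> restrict_game G B"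

lemma trap_subset_verts: "B \<subseteq> verts G"
  using trap by blast

lemma trap_succs_V2_Vp: "x \<in> B \<Longrightarrow> x \<in> V2 G \<union> Vp G \<Longrightarrow> succs G x \<subseteq> B"
  and trap_succs_V1: "x \<in> B \<Longrightarrow> x \<in> V1 G \<Longrightarrow> succs G x \<inter> B \<noteq> {}"
  using PosAttr2_unfold[of G T] stoch_game_succs_verts[OF game]
  unfolding attractor[symmetric] trap PosPre2_def by blast+

lemma subgame_simps:
  "verts subgame = B" "V1 subgame = V1 G \<inter> B" "V2 subgame = V2 G \<inter> B" "Vp subgame = Vp G \<inter> B"
  "edges subgame = edges G \<inter> B \<times> B" "delta subgame = (\<lambda>x. cond_pmf (delta G x) B)"
  unfolding restrict_game_def using trap_subset_verts by auto

lemma succs_subgame: "succs subgame x = (if x \<in> B then succs G x \<inter> B else {})"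
  unfolding succs_def subgame_simps by auto

lemma delta_subgame: "x \<in> Vp G \<Longrightarrow> x \<in> B \<Longrightarrow> delta subgame x = delta G x"
  unfolding subgame_simps
  using trap_succs_V2_Vp stoch_game_set_pmf_delta[OF game] by (intro cond_pmf_superset) auto

lemma stoch_game_subgame: "stoch_game subgame"
  unfolding stoch_game_def
proof (intro conjI ballI)
  note part = stoch_game_partition[OF game]
  show "finite (verts subgame)"
    using stoch_game_finite[OF game] trap_subset_verts by (simp add: subgame_simps finite_subset)
  show "V1 subgame \<union> V2 subgame \<union> Vp subgame = verts subgame"
    using part trap_subset_verts by (auto simp: subgame_simps)
  show "V1 subgame \<inter> V2 subgame = {}" "V1 subgame \<inter> Vp subgame = {}" "V2 subgame \<inter> Vp subgame = {}"
    using stoch_game_disjoint[OF game] by (auto simp: subgame_simps)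
  show "edges subgame \<subseteq> verts subgame \<times> verts subgame"
    by (auto simp: subgame_simps)
  fix x assume "x \<in> verts subgame"
  then have x: "x \<in> B" "x \<in> verts G" using trap_subset_verts by (auto simp: subgame_simps)
  then show "succs subgame x \<noteq> {}"
    using trap_succs_V1[of x] trap_succs_V2_Vp[of x] stoch_game_succs_nonempty[OF game, of x] part
    by (cases "x \<in> V1 G") (auto simp: succs_subgame)
next
  fix x assume "x \<in> Vp subgame"
  then have "x \<in> B" "x \<in> Vp G" by (auto simp: subgame_simps)
  then show "set_pmf (delta subgame x) = succs subgame x"
    using delta_subgame trap_succs_V2_Vp stoch_game_set_pmf_delta[OF game] by (auto simp: succs_subgame)
qed

lemma strategy_subgame_V2: "strategy G (V2 G) \<sigma>2 \<Longrightarrow> strategy subgame (V2 subgame) \<sigma>2"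
  unfolding strategy_def using trap_succs_V2_Vp by (auto simp: subgame_simps succs_subgame)

lemma trans_prob_subgame:
  assumes "last h \<in> B" "last h' = last h"
    and "last h \<in> V1 G \<Longrightarrow> \<sigma>1 h = \<sigma>1' h'" "last h \<in> V2 G \<Longrightarrow> \<sigma>2 h = \<sigma>2' h'"
  shows "trans_prob subgame \<sigma>1 \<sigma>2 h w = trans_prob G \<sigma>1' \<sigma>2' h' w"
  using assms delta_subgame[of "last h"] unfolding trans_prob_def subgame_simps by auto

definition extend_strategy :: "('v list \<Rightarrow> 'v) \<Rightarrow> 'v list \<Rightarrow> 'v" where
  "extend_strategy \<sigma> h = (if last h \<in> B then \<sigma> h else (SOME w. w \<in> succs G (last h)))"

lemma strategy_extend_strategy:
  assumes \<sigma>: "strategy subgame (V1 subgame) \<sigma>"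
  shows "strategy G (V1 G) (extend_strategy \<sigma>)"
  unfolding strategy_def
proof (intro allI impI)
  fix h assume h: "h \<noteq> [] \<and> last h \<in> V1 G"
  then have "succs G (last h) \<noteq> {}"
    using stoch_game_partition[OF game] stoch_game_succs_nonempty[OF game] by blast
  then show "extend_strategy \<sigma> h \<in> succs G (last h)"
    using strategyD[OF \<sigma>, of h] h
    by (cases "last h \<in> B") (auto simp: extend_strategy_def subgame_simps succs_subgame some_in_eq)
qed

lemma Out_extend_strategy_subset:
  assumes u: "u \<in> B" and \<sigma>: "strategy subgame (V1 subgame) \<sigma>"
  shows "Out G u (extend_strategy \<sigma>) \<subseteq> Out subgame u \<sigma>"
proof
  fix \<rho> assume "\<rho> \<in> Out G u (extend_strategy \<sigma>)"
  then have r0: "\<rho> !! 0 = u" and re: "\<And>i. (\<rho> !! i, \<rho> !! Suc i) \<in> edges G"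
    and rs: "\<And>i. \<rho> !! i \<in> V1 G \<Longrightarrow> \<rho> !! Suc i = extend_strategy \<sigma> (stake (Suc i) \<rho>)"
    unfolding Out_def by blast+
  have follows: "\<rho> !! Suc i = \<sigma> (stake (Suc i) \<rho>)" if "\<rho> !! i \<in> V1 G" "\<rho> !! i \<in> B" for i
    using rs[OF that(1)] that(2) by (simp add: extend_strategy_def last_stake_Suc del: stake.simps)
  have inB: "\<rho> !! i \<in> B" for i
  proof (induction i)
    case 0 then show ?case using r0 u by simp
  next
    case (Suc i)
    show ?case
    proof (cases "\<rho> !! i \<in> V1 G")
      case True
      have "\<sigma> (stake (Suc i) \<rho>) \<in> succs subgame (\<rho> !! i)"
        using strategyD[OF \<sigma>, of "stake (Suc i) \<rho>"] True Suc
        by (simp add: last_stake_Suc subgame_simps del: stake.simps)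
      then show ?thesis using follows[OF True Suc] by (simp add: succs_subgame split: if_splits)
    next
      case False
      then have "\<rho> !! i \<in> V2 G \<union> Vp G"
        using Suc trap_subset_verts stoch_game_partition[OF game] by blast
      then show ?thesis using trap_succs_V2_Vp[OF Suc] re[of i] unfolding succs_def by blast
    qed
  qed
  show "\<rho> \<in> Out subgame u \<sigma>"
    unfolding Out_def subgame_simps using r0 re inB follows by blast
qed

lemma hist_prob_extend_strategy:
  assumes u: "u \<in> B" and \<sigma>1: "strategy subgame (V1 subgame) \<sigma>1" and \<sigma>2: "strategy G (V2 G) \<sigma>2"
  shows "hist_prob subgame u \<sigma>1 \<sigma>2 x = hist_prob G u (extend_strategy \<sigma>1) \<sigma>2 x"
  unfolding hist_prob_def
proof (intro if_cong refl prod_trans_prob_cong_invariant[where Q="\<lambda>h. h \<noteq> [] \<and> last h \<in> B"])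
  show "x ! 0 = u \<Longrightarrow> [x ! 0] \<noteq> [] \<and> last [x ! 0] \<in> B" using u by simp
  show "h @ [w] \<noteq> [] \<and> last (h @ [w]) \<in> B"
    if "h \<noteq> [] \<and> last h \<in> B" "trans_prob subgame \<sigma>1 \<sigma>2 h w \<noteq> 0" for h w
    using that succs_if_trans_prob_nonzero[OF stoch_game_subgame \<sigma>1 strategy_subgame_V2[OF \<sigma>2], of h w]
    by (simp add: succs_subgame)
  show "trans_prob subgame \<sigma>1 \<sigma>2 h w = trans_prob G (extend_strategy \<sigma>1) \<sigma>2 h w"
    if "h \<noteq> [] \<and> last h \<in> B" for h w
    using that by (intro trans_prob_subgame) (simp_all add: extend_strategy_def)
qed

lemma sas_region_subgame_subset: "sas_region subgame \<Omega>1 \<Omega>2 \<subseteq> sas_region G \<Omega>1 \<Omega>2"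
proof
  fix u assume "u \<in> sas_region subgame \<Omega>1 \<Omega>2"
  then obtain \<sigma>1 where u: "u \<in> B" and \<sigma>1: "strategy subgame (V1 subgame) \<sigma>1"
    and sure: "Out subgame u \<sigma>1 \<subseteq> {\<rho>. parity \<Omega>1 \<rho>}"
    and almost_sure: "\<And>\<sigma>2. strategy subgame (V2 subgame) \<sigma>2 \<Longrightarrow>
      measure (Pr subgame u \<sigma>1 \<sigma>2) {\<rho>. parity \<Omega>2 \<rho>} = 1"
    unfolding sas_region_def subgame_simps by blast
  have "Pr G u (extend_strategy \<sigma>1) \<sigma>2 = Pr subgame u \<sigma>1 \<sigma>2" if "strategy G (V2 G) \<sigma>2" for \<sigma>2
    unfolding Pr_def hist_prob_extend_strategy[OF u \<sigma>1 that] ..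
  then show "u \<in> sas_region G \<Omega>1 \<Omega>2"
    unfolding sas_region_def
    using u trap_subset_verts strategy_extend_strategy[OF \<sigma>1] Out_extend_strategy_subset[OF u \<sigma>1]
      sure almost_sure strategy_subgame_V2 by (intro CollectI conjI exI[of _ "extend_strategy \<sigma>1"]) auto
qed

end

section \<open>Resuming a confined history in the subgame\<close>

lemma sstart_append: "\<rho> \<in> sstart UNIV (xs @ ys) \<longleftrightarrow> \<rho> \<in> sstart UNIV xs \<and> sdrop (length xs) \<rho> \<in> sstart UNIV ys"
  by (induction xs arbitrary: \<rho>) auto

lemma sstart_snoc_inter_vimage_sdrop:
  assumes "xs \<noteq> []"
  shows "sstart UNIV (ys @ [a]) \<inter> sdrop (length ys) -` sstart UNIV xs =
    (if xs ! 0 = a then sstart UNIV (ys @ xs) else {})"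
proof -
  obtain b xs' where xs: "xs = b # xs'" using assms by (cases xs) auto
  show ?thesis
    unfolding xs by (rule set_eqI) (simp add: sstart_append)
qed

lemma measurable_sdrop_uniform_measure:
  assumes "sets M = sets (stream_space (count_space UNIV))"
  shows "sdrop k \<in> measurable (uniform_measure M C) (stream_space (count_space UNIV))"
proof -
  have "sets (uniform_measure M C) = sets (stream_space (count_space UNIV))" using assms by simp
  then show ?thesis using measurable_sdrop by (subst measurable_cong_sets[OF _ refl])
qed

lemma emeasure_distr_sdrop_uniform_measure:
  assumes sets: "sets M = sets (stream_space (count_space UNIV))" and C: "C \<in> sets M"
    and X: "X \<in> sets (stream_space (count_space UNIV))"
  shows "emeasure (distr (uniform_measure M C) (stream_space (count_space UNIV)) (sdrop k)) X =
    emeasure M (C \<inter> sdrop k -` X) / emeasure M C"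
proof -
  let ?U = "uniform_measure M C"
  note sdrop = measurable_sdrop_uniform_measure[OF sets, of k C]
  have space: "space ?U = UNIV"
    using sets_eq_imp_space_eq[of ?U "stream_space (count_space UNIV)"] sets by (simp add: space_stream_space)
  have "emeasure (distr ?U (stream_space (count_space UNIV)) (sdrop k)) X = emeasure ?U (sdrop k -` X \<inter> space ?U)"
    by (rule emeasure_distr[OF sdrop X])
  also have "\<dots> = emeasure M (C \<inter> (sdrop k -` X \<inter> space ?U)) / emeasure M C"
  proof (rule emeasure_uniform_measure[OF C])
    show "sdrop k -` X \<inter> space ?U \<in> sets M"
      using measurable_sets[OF sdrop X] sets by simp
  qed
  finally show ?thesis using space by simp
qed

lemma emeasure_distr_sdrop_uniform_measure_eq_1:
  assumes M: "prob_space M" and sets: "sets M = sets (stream_space (count_space UNIV))"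
    and C: "C \<in> sets M" "emeasure M C \<noteq> 0"
    and P: "measure M P = 1" and shift: "sdrop k -` P = P"
  shows "emeasure (distr (uniform_measure M C) (stream_space (count_space UNIV)) (sdrop k)) P = 1"
proof -
  interpret prob_space M by (fact M)
  have P_sets: "P \<in> sets M" using P measure_notin_sets[of P M] by fastforce
  then have "AE \<rho> in M. \<rho> \<in> P" using AE_in_set_eq_1 P by simp
  then have "emeasure M (C \<inter> P) = emeasure M C" using P_sets C by (intro emeasure_eq_AE) auto
  moreover have "emeasure M C / emeasure M C = 1"
    using C(2) by (intro ennreal_divide_self) (simp_all add: emeasure_eq_measure)
  ultimately show ?thesis
    using emeasure_distr_sdrop_uniform_measure[OF sets C(1), of P k] P_sets sets shift by simp
qed

locale confined_history = attractor_trap G T A B for G :: "'v game" and T A B +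
  fixes v :: 'v and \<sigma>1 :: "'v list \<Rightarrow> 'v" and hb :: "'v list" and u :: 'v
  assumes v: "v \<in> verts G" and \<sigma>1: "strategy G (V1 G) \<sigma>1"
    and consistent_hist: "consistent G v \<sigma>1 (hb @ [u])"
    and confined: "\<And>z. consistent G v \<sigma>1 (hb @ u # z) \<Longrightarrow> last (u # z) \<in> B"
begin

lemma u_in_trap: "u \<in> B"
  using confined[of "[]"] consistent_hist by simp

text \<open>The fallback is never taken along histories consistent with \<sigma>1 (see resumed_eq).\<close>

definition resumed :: "'v list \<Rightarrow> 'v" where
  "resumed h = (if \<sigma>1 (hb @ h) \<in> succs G (last h) \<inter> B then \<sigma>1 (hb @ h)
     else (SOME w. w \<in> succs G (last h) \<inter> B))"

lemma strategy_resumed: "strategy subgame (V1 subgame) resumed"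
  unfolding strategy_def
proof (intro allI impI)
  fix h assume h: "h \<noteq> [] \<and> last h \<in> V1 subgame"
  then have "\<exists>w. w \<in> succs G (last h) \<inter> B" using trap_succs_V1 by (auto simp: subgame_simps)
  from someI_ex[OF this] have "resumed h \<in> succs G (last h) \<inter> B"
    unfolding resumed_def by (subst if_split) blast
  then show "resumed h \<in> succs subgame (last h)" using h by (simp add: succs_subgame subgame_simps)
qed

lemma resumed_eq:
  assumes c: "consistent G v \<sigma>1 (hb @ u # z)" and V1: "last (u # z) \<in> V1 G"
  shows "resumed (u # z) = \<sigma>1 (hb @ u # z)"
proof -
  have w: "\<sigma>1 (hb @ u # z) \<in> succs G (last (u # z))"
    using strategyD[OF \<sigma>1, of "hb @ u # z"] V1 by simp
  then have "consistent G v \<sigma>1 ((hb @ u # z) @ [\<sigma>1 (hb @ u # z)])"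
    using c V1 by (intro consistent_snoc) (auto simp: succs_def)
  then have "\<sigma>1 (hb @ u # z) \<in> B" using confined[of "z @ [\<sigma>1 (hb @ u # z)]"] by simp
  then show ?thesis using w unfolding resumed_def by simp
qed

lemma consistent_resumed_play:
  assumes \<rho>: "\<rho> \<in> Out subgame u resumed"
  shows "consistent G v \<sigma>1 (hb @ stake (Suc n) \<rho>)"
proof (induction n)
  case 0
  then show ?case using consistent_hist \<rho> by (simp add: Out_def)
next
  case (Suc n)
  have e: "(\<rho> !! n, \<rho> !! Suc n) \<in> edges G"
    and follows: "\<rho> !! n \<in> V1 G \<Longrightarrow> \<rho> !! n \<in> B \<Longrightarrow> \<rho> !! Suc n = resumed (stake (Suc n) \<rho>)"
    using \<rho> unfolding Out_def subgame_simps by blast+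
  obtain z where z: "stake (Suc n) \<rho> = u # z" using \<rho> by (simp add: Out_def)
  have last: "last (hb @ stake (Suc n) \<rho>) = \<rho> !! n" by (simp add: last_stake_Suc del: stake.simps)
  have "\<rho> !! n \<in> B" using confined[of z] Suc.IH z last by simp
  then have "\<rho> !! n \<in> V1 G \<Longrightarrow> \<rho> !! Suc n = \<sigma>1 (hb @ stake (Suc n) \<rho>)"
    using follows resumed_eq[of z] Suc.IH z last by simp
  then have "consistent G v \<sigma>1 ((hb @ stake (Suc n) \<rho>) @ [\<rho> !! Suc n])"
    using Suc.IH e last by (intro consistent_snoc) simp_all
  then show ?case by (simp only: stake_Suc[of "Suc n"] append_assoc)
qed

lemma Out_resumed_subset:
  assumes "Out G v \<sigma>1 \<subseteq> {\<rho>. parity \<Omega> \<rho>}"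
  shows "Out subgame u resumed \<subseteq> {\<rho>. parity \<Omega> \<rho>}"
proof
  fix \<rho> assume \<rho>: "\<rho> \<in> Out subgame u resumed"
  have "hb @- \<rho> \<in> Out G v \<sigma>1"
  proof (rule Out_if_consistent_stake)
    fix n
    have "stake (Suc n + length hb) (hb @- \<rho>) = hb @ stake (Suc n) \<rho>" by (simp add: stake_shift)
    then have "consistent G v \<sigma>1 (stake (Suc n) (hb @- \<rho>) @ stake (length hb) (sdrop (Suc n) (hb @- \<rho>)))"
      using consistent_resumed_play[OF \<rho>, of n] by (simp only: stake_add)
    then show "consistent G v \<sigma>1 (stake (Suc n) (hb @- \<rho>))"
      by (rule consistent_prefix) (simp del: stake.simps)
  qed
  then show "\<rho> \<in> {\<rho>. parity \<Omega> \<rho>}" using assms parity_shift by blast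
qed

text \<open>Player 2 first replays the history hb @ [u], which gives its cylinder positive probability,
  and then plays \<sigma>2 on the part of the history after hb.\<close>

definition lifted :: "('v list \<Rightarrow> 'v) \<Rightarrow> 'v list \<Rightarrow> 'v" where
  "lifted \<sigma>2 h =
    (if take (length h) hb = h then (hb @ [u]) ! length h
     else if \<sigma>2 (drop (length hb) h) \<in> succs G (last h) then \<sigma>2 (drop (length hb) h)
     else (SOME w. w \<in> succs G (last h)))"

lemma lifted_prefix: "j < length hb \<Longrightarrow> lifted \<sigma>2 (take (Suc j) (hb @ [u])) = (hb @ [u]) ! Suc j"
  unfolding lifted_def by (simp add: min_def nth_append)

lemma lifted_extension:
  assumes \<sigma>2: "strategy subgame (V2 subgame) \<sigma>2" and h: "h \<noteq> []" "last h \<in> V2 G" "last h \<in> B"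
  shows "lifted \<sigma>2 (hb @ h) = \<sigma>2 h"
proof -
  have "\<sigma>2 h \<in> succs G (last h)"
    using strategyD[OF \<sigma>2 h(1)] h by (simp add: subgame_simps succs_subgame)
  then show ?thesis using h(1) unfolding lifted_def by simp
qed

lemma strategy_lifted: "strategy G (V2 G) (lifted \<sigma>2)"
  unfolding strategy_def
proof (intro allI impI)
  fix h assume h: "h \<noteq> [] \<and> last h \<in> V2 G"
  show "lifted \<sigma>2 h \<in> succs G (last h)"
  proof (cases "take (length h) hb = h")
    case True
    obtain n where n: "length h = Suc n" using h by (cases h) auto
    then have "Suc n \<le> length hb" using True by (metis length_take min.cobounded1)
    moreover have "last h = hb ! n"
      using True h n by (metis diff_Suc_1 last_conv_nth lessI nth_take)
    ultimately have "(last h, (hb @ [u]) ! Suc n) \<in> edges G"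
      using consistent_hist unfolding consistent_def by (simp add: nth_append)
    then show ?thesis using True n unfolding lifted_def succs_def by simp
  next
    case False
    have "succs G (last h) \<noteq> {}"
      using h stoch_game_partition[OF game] stoch_game_succs_nonempty[OF game] by blast
    then show ?thesis using False unfolding lifted_def by (auto simp: some_in_eq)
  qed
qed


lemma hist_prob_history_pos: "hist_prob G v \<sigma>1 (lifted \<sigma>2) (hb @ [u]) > 0"
proof -
  let ?y = "hb @ [u]"
  have "trans_prob G \<sigma>1 (lifted \<sigma>2) (take (Suc i) ?y) (?y ! Suc i) > 0" if i: "i < length hb" for i
  proof -
    have edge: "(?y ! i, ?y ! Suc i) \<in> edges G"
      and follows: "?y ! i \<in> V1 G \<Longrightarrow> ?y ! Suc i = \<sigma>1 (take (Suc i) ?y)"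
      using consistent_hist i unfolding consistent_def by auto
    have last: "last (take (Suc i) ?y) = ?y ! i" using i by (simp add: take_Suc_conv_app_nth nth_append)
    have "?y ! i \<in> verts G" using consistent_nth_verts[OF game v consistent_hist, of i] i by simp
    then consider "?y ! i \<in> V1 G" | "?y ! i \<notin> V1 G" "?y ! i \<in> V2 G"
      | "?y ! i \<notin> V1 G" "?y ! i \<notin> V2 G" "?y ! i \<in> Vp G"
      using stoch_game_partition[OF game] by blast
    then show ?thesis
    proof cases
      case 1
      then show ?thesis using follows last unfolding trans_prob_def by simp
    next
      case 2
      then show ?thesis using lifted_prefix[OF i] last unfolding trans_prob_def by simp
    next
      case 3
      then have "?y ! Suc i \<in> set_pmf (delta G (?y ! i))"
        using edge stoch_game_set_pmf_delta[OF game] by (simp add: succs_def)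
      then show ?thesis using 3 last pmf_positive unfolding trans_prob_def by simp
    qed
  qed
  then show ?thesis
    using consistent_hist unfolding hist_prob_def consistent_def by (auto intro!: prod_pos)
qed

lemma hist_prob_continuation:
  assumes \<sigma>2: "strategy subgame (V2 subgame) \<sigma>2"
  shows "hist_prob G v \<sigma>1 (lifted \<sigma>2) (hb @ u # x) =
    hist_prob G v \<sigma>1 (lifted \<sigma>2) (hb @ [u]) * hist_prob subgame u resumed \<sigma>2 (u # x)"
proof -
  let ?Q = "\<lambda>h. \<exists>z. h = u # z \<and> consistent G v \<sigma>1 (hb @ u # z)"
  have "(\<Prod>i<length (u # x) - 1. trans_prob subgame resumed \<sigma>2 (take (Suc i) (u # x)) ((u # x) ! Suc i)) =
      (\<Prod>i<length (u # x) - 1. trans_prob G \<sigma>1 (lifted \<sigma>2) (hb @ take (Suc i) (u # x)) ((u # x) ! Suc i))"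
  proof (rule prod_trans_prob_cong_invariant[where Q = ?Q])
    show "?Q [(u # x) ! 0]" using consistent_hist by simp
  next
    fix h w assume "?Q h" and nz: "trans_prob subgame resumed \<sigma>2 h w \<noteq> 0"
    then obtain z where h: "h = u # z" and c: "consistent G v \<sigma>1 (hb @ u # z)" by blast
    have "w \<in> succs subgame (last h)"
      using succs_if_trans_prob_nonzero[OF stoch_game_subgame strategy_resumed \<sigma>2 _ nz] h by simp
    then have "w \<in> succs G (last h)" and B: "last h \<in> B" by (simp_all add: succs_subgame split: if_splits)
    then have e: "(last (hb @ u # z), w) \<in> edges G" using h by (simp add: succs_def)
    have "w = \<sigma>1 (hb @ u # z)" if "last (hb @ u # z) \<in> V1 G"
    proof -
      have "last h \<in> V1 subgame" using that B h by (simp add: subgame_simps)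
      then have "resumed h = w" using nz unfolding trans_prob_def by (auto split: if_splits)
      then show ?thesis using resumed_eq[OF c] that h by simp
    qed
    then have "consistent G v \<sigma>1 ((hb @ u # z) @ [w])" using c e by (intro consistent_snoc) auto
    then show "?Q (h @ [w])" using h by simp
  next
    fix h w assume "?Q h"
    then obtain z where h: "h = u # z" and c: "consistent G v \<sigma>1 (hb @ u # z)" by blast
    have B: "last h \<in> B" using confined[OF c] h by simp
    show "trans_prob subgame resumed \<sigma>2 h w = trans_prob G \<sigma>1 (lifted \<sigma>2) (hb @ h) w"
    proof (rule trans_prob_subgame)
      show "last h \<in> B" "last (hb @ h) = last h" using B h by simp_all
      show "resumed h = \<sigma>1 (hb @ h)" if "last h \<in> V1 G" using resumed_eq[OF c] that h by simp
      show "\<sigma>2 h = lifted \<sigma>2 (hb @ h)" if "last h \<in> V2 G" using lifted_extension[OF \<sigma>2] that B h by simp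
    qed
  qed
  then show ?thesis
    using hist_prob_append[of "hb @ [u]" G v \<sigma>1 "lifted \<sigma>2" x] unfolding hist_prob_def[of subgame] by simp
qed


lemma play_measure_lifted:
  "play_measure G v \<sigma>1 (lifted \<sigma>2) (Pr G v \<sigma>1 (lifted \<sigma>2))"
  by (rule play_measure_Pr[OF game \<sigma>1 strategy_lifted v])

lemma emeasure_history_cylinder:
  "emeasure (Pr G v \<sigma>1 (lifted \<sigma>2)) (sstart UNIV (hb @ [u])) = ennreal (hist_prob G v \<sigma>1 (lifted \<sigma>2) (hb @ [u]))"
  using play_measure_lifted unfolding play_measure_def by simp

lemma Pr_subgame_resumed:
  assumes \<sigma>2: "strategy subgame (V2 subgame) \<sigma>2"
  shows "Pr subgame u resumed \<sigma>2 =
    distr (uniform_measure (Pr G v \<sigma>1 (lifted \<sigma>2)) (sstart UNIV (hb @ [u])))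
      (stream_space (count_space UNIV)) (sdrop (length hb))"
    (is "_ = ?N")
proof (rule Pr_eqI[OF stoch_game_subgame strategy_resumed \<sigma>2])
  let ?M = "Pr G v \<sigma>1 (lifted \<sigma>2)" and ?C = "sstart UNIV (hb @ [u])"
  and ?p = "hist_prob G v \<sigma>1 (lifted \<sigma>2) (hb @ [u])"
  show "u \<in> verts subgame" using u_in_trap by (simp add: subgame_simps)
  have sets: "sets ?M = sets (stream_space (count_space UNIV))"
    and cyl: "\<And>h. h \<noteq> [] \<Longrightarrow> emeasure ?M (sstart UNIV h) = ennreal (hist_prob G v \<sigma>1 (lifted \<sigma>2) h)"
    using play_measure_lifted unfolding play_measure_def by blast+
  have C: "?C \<in> sets ?M" using sets by simp
  have p: "?p > 0" by (rule hist_prob_history_pos)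
  have "prob_space (uniform_measure ?M ?C)"
    using p emeasure_history_cylinder by (intro prob_space_uniform_measure) auto
  then have "prob_space ?N"
    by (rule prob_space.prob_space_distr) (rule measurable_sdrop_uniform_measure[OF sets])
  moreover have "emeasure ?N (sstart UNIV x) = ennreal (hist_prob subgame u resumed \<sigma>2 x)" if "x \<noteq> []" for x
  proof (cases "x ! 0 = u")
    case True
    then obtain x' where x: "x = u # x'" using \<open>x \<noteq> []\<close> by (cases x) auto
    have "emeasure ?N (sstart UNIV x) = emeasure ?M (sstart UNIV (hb @ x)) / emeasure ?M ?C"
      using emeasure_distr_sdrop_uniform_measure[OF sets C sstart_sets[of UNIV x]]
        sstart_snoc_inter_vimage_sdrop[OF \<open>x \<noteq> []\<close>, of hb u] True by simp
    also have "\<dots> = ennreal (hist_prob G v \<sigma>1 (lifted \<sigma>2) (hb @ u # x')) / ennreal ?p"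
      using cyl[of "hb @ x"] emeasure_history_cylinder x by simp
    finally have "emeasure ?N (sstart UNIV x) = \<dots>" .
    then show ?thesis
      using hist_prob_continuation[OF \<sigma>2, of x'] p x by (simp add: divide_ennreal hist_prob_nonneg)
  next
    case False
    then show ?thesis
      using emeasure_distr_sdrop_uniform_measure[OF sets C sstart_sets[of UNIV x]]
        sstart_snoc_inter_vimage_sdrop[OF that, of hb u]
      by (simp add: hist_prob_def)
  qed
  ultimately show "play_measure subgame u resumed \<sigma>2 ?N"
    unfolding play_measure_def by simp
qed

lemma u_in_sas_region_subgame:
  assumes sure: "Out G v \<sigma>1 \<subseteq> {\<rho>. parity \<Omega>1 \<rho>}"
    and almost_sure: "\<And>\<sigma>2. strategy G (V2 G) \<sigma>2 \<Longrightarrow> measure (Pr G v \<sigma>1 \<sigma>2) {\<rho>. parity \<Omega>2 \<rho>} = 1"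
  shows "u \<in> sas_region subgame \<Omega>1 \<Omega>2"
proof -
  have "measure (Pr subgame u resumed \<sigma>2) {\<rho>. parity \<Omega>2 \<rho>} = 1"
    if \<sigma>2: "strategy subgame (V2 subgame) \<sigma>2" for \<sigma>2
  proof -
    interpret N: prob_space "Pr subgame u resumed \<sigma>2"
      using play_measure_Pr[OF stoch_game_subgame strategy_resumed \<sigma>2] u_in_trap
      unfolding play_measure_def by (simp add: subgame_simps)
    have "sdrop (length hb) -` {\<rho>. parity \<Omega>2 \<rho>} = {\<rho>. parity \<Omega>2 \<rho>}" by (auto simp: parity_sdrop)
    then have "emeasure (Pr subgame u resumed \<sigma>2) {\<rho>. parity \<Omega>2 \<rho>} = 1"
      unfolding Pr_subgame_resumed[OF \<sigma>2]
      using play_measure_lifted emeasure_history_cylinder hist_prob_history_pos[of \<sigma>2]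
        almost_sure[OF strategy_lifted]
      by (intro emeasure_distr_sdrop_uniform_measure_eq_1) (auto simp: play_measure_def)
    then show ?thesis by (simp add: N.emeasure_eq_measure)
  qed
  then show ?thesis
    unfolding sas_region_def using u_in_trap strategy_resumed Out_resumed_subset[OF sure]
    by (auto simp: subgame_simps)
qed

end

lemma sas_region_restrict_game_nonempty:
  assumes G: "stoch_game G" and d: "d = Max (\<Omega>1 ` verts G)" and odd: "odd d"
    and A: "A = PosAttr2 G {v \<in> verts G. \<Omega>1 v = d}" and B: "B = verts G - A"
    and win: "v \<in> sas_region G \<Omega>1 \<Omega>2"
  shows "sas_region (restrict_game G B) \<Omega>1 \<Omega>2 \<noteq> {}"
proof -
  obtain \<sigma>1 where v: "v \<in> verts G" and \<sigma>1: "strategy G (V1 G) \<sigma>1"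
    and sure: "Out G v \<sigma>1 \<subseteq> {\<rho>. parity \<Omega>1 \<rho>}"
    and almost_sure: "\<And>\<sigma>2. strategy G (V2 G) \<sigma>2 \<Longrightarrow> measure (Pr G v \<sigma>1 \<sigma>2) {\<rho>. parity \<Omega>2 \<rho>} = 1"
    using win unfolding sas_region_def by blast
  obtain y where y: "consistent G v \<sigma>1 y"
    and confined: "\<And>z. consistent G v \<sigma>1 (y @ z) \<Longrightarrow> last (y @ z) \<in> B"
    using ex_consistent_history_confined[OF G \<sigma>1 v sure d odd A B] by blast
  obtain hb u where "y = hb @ [u]"
    using y unfolding consistent_def by (cases y rule: rev_exhaust) auto
  then interpret confined_history G "{v \<in> verts G. \<Omega>1 v = d}" A B v \<sigma>1 hb u
    using G A B v \<sigma>1 y confined by unfold_locales (auto dest: confined[of "_ # _"])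
  show ?thesis using u_in_sas_region_subgame[OF sure almost_sure] by blast
qed

theorem lemma5:
  fixes G :: "'v game" and \<Omega>1 \<Omega>2 :: "'v \<Rightarrow> nat" and d :: nat and A B :: "'v set"
  assumes "stoch_game G"
    and "d = Max (\<Omega>1 ` verts G)"
    and "odd d"
    and "A = PosAttr2 G {v \<in> verts G. \<Omega>1 v = d}"
    and "B = verts G - A"
  shows "sas_region G \<Omega>1 \<Omega>2 = {} \<longleftrightarrow> sas_region (restrict_game G B) \<Omega>1 \<Omega>2 = {}"
proof -
  interpret attractor_trap G "{v \<in> verts G. \<Omega>1 v = d}" A B
    using assms by unfold_locales
  show ?thesis
    using sas_region_subgame_subset sas_region_restrict_game_nonempty[OF assms] by blast
qed

end
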